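(* Let $X$ be a simple chain. (1) If $X$ is rigid, then the group $(\mathrm{Aut}(X),\tau_p)$, and hence also $(\mathrm{Aut}(X),\tau_\partial)$, is not Roelcke precompact. (2) If $X$ is ultrahomogeneous, then the group $(\mathrm{Aut}(X),\tau_\partial)$, and hence also $(\mathrm{Aut}(X),\tau_p)$, is Roelcke precompact.
   Context: A chain is a linearly ordered set; $\mathrm{Aut}(X)$ is its group of order-preserving bijections. $X$ is homogeneous if $\mathrm{Aut}(X)$ acts transitively. An interval is a convex subset. An interval $J$ is regular if for all $x,y\in J$ and $g\in\mathrm{Aut}(X)$, $g(x)\in J$ implies $g(y)\in J$. A homogeneous chain is simple if it has no proper regular intervals (i.e. the only nonempty regular intervals are singletons and $X$). A homogeneous chain is rigid if for any $x,y\in X$ there is exactly one $g\in\mathrm{Aut}(X)$ with $g(x)=y$. $X$ is ultrahomogeneous if for every $n$ and all $x_1<\dots<x_n$, $y_1<\dots<y_n$ in $X$ there is $g\in\mathrm{Aut}(X)$ with $g(x_k)=y_k$. $\tau_p$ is the topology of pointwise convergence on $\mathrm{Aut}(X)$ where $X$ carries the linear order topology; $\tau_\partial$ is the permutation topology, whose identity neighbourhood base consists of pointwise stabilizers of finite subsets of $X$. A topological group is Roelcke precompact if its Roelcke uniformity (the greatest lower bound of the left and right uniformities) is totally bounded. *)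

theory Defs
  imports "HOL-Analysis.Analysis"
begin

text \<open>A chain is represented by a type of class linorder_topology: a linear order
  carrying its order (interval) topology. The chain X is the whole type.\<close>

definition Aut :: "('a::linorder \<Rightarrow> 'a) set" where
  "Aut = {g. bij g \<and> mono g}"

definition homogeneous_chain :: "'a::linorder itself \<Rightarrow> bool" where
  "homogeneous_chain _ \<longleftrightarrow> (\<forall>x y::'a. \<exists>g\<in>Aut. g x = y)"

definition chain_interval :: "'a::linorder set \<Rightarrow> bool" where
  "chain_interval J \<longleftrightarrow> (\<forall>a b c. a \<in> J \<and> c \<in> J \<and> a \<le> b \<and> b \<le> c \<longrightarrow> b \<in> J)"

definition regular_interval :: "'a::linorder set \<Rightarrow> bool" where
  "regular_interval J \<longleftrightarrow> chain_interval J \<and>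
     (\<forall>x\<in>J. \<forall>y\<in>J. \<forall>g\<in>Aut. g x \<in> J \<longrightarrow> g y \<in> J)"

definition simple_chain :: "'a::linorder itself \<Rightarrow> bool" where
  "simple_chain T \<longleftrightarrow> homogeneous_chain T \<and>
     (\<forall>J::'a set. J \<noteq> {} \<and> regular_interval J \<longrightarrow> (\<exists>x. J = {x}) \<or> J = UNIV)"

definition rigid_chain :: "'a::linorder itself \<Rightarrow> bool" where
  "rigid_chain T \<longleftrightarrow> homogeneous_chain T \<and> (\<forall>x y::'a. \<exists>!g. g \<in> Aut \<and> g x = y)"

definition ultrahomogeneous_chain :: "'a::linorder itself \<Rightarrow> bool" where
  "ultrahomogeneous_chain _ \<longleftrightarrow>
     (\<forall>xs ys :: 'a list. sorted_wrt (<) xs \<and> sorted_wrt (<) ys \<and> length xs = length ys \<longrightarrow>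
        (\<exists>g\<in>Aut. \<forall>k < length xs. g (xs ! k) = ys ! k))"

definition tau_p :: "('a::linorder_topology \<Rightarrow> 'a) topology" where
  "tau_p = subtopology (product_topology (\<lambda>_. euclidean) UNIV) Aut"

definition tau_partial :: "('a::linorder \<Rightarrow> 'a) topology" where
  "tau_partial = subtopology (product_topology (\<lambda>_. discrete_topology UNIV) UNIV) Aut"

definition roelcke_entourage :: "('a \<Rightarrow> 'a) set \<Rightarrow> ('a \<Rightarrow> 'a) topology \<Rightarrow> (('a \<Rightarrow> 'a) \<times> ('a \<Rightarrow> 'a)) set \<Rightarrow> bool" where
  "roelcke_entourage G T E \<longleftrightarrow> E \<subseteq> G \<times> G \<and>
     (\<exists>U. openin T U \<and> id \<in> U \<and>
        {(x, y). x \<in> G \<and> y \<in> G \<and> (\<exists>u\<in>U. \<exists>v\<in>U. y = u \<circ> x \<circ> v)} \<subseteq> E)"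

definition roelcke_precompact :: "('a \<Rightarrow> 'a) set \<Rightarrow> ('a \<Rightarrow> 'a) topology \<Rightarrow> bool" where
  "roelcke_precompact G T \<longleftrightarrow>
     (\<forall>E. roelcke_entourage G T E \<longrightarrow>
        (\<exists>F. finite F \<and> F \<subseteq> G \<and> G \<subseteq> (\<Union>f\<in>F. {y. (f, y) \<in> E})))"

end

theory Submission
  imports Defs
begin

text \<open>In a rigid chain an automorphism k other than the identity has no fixed point, and it
  cannot move a point p down and a larger point q up: otherwise k, restricted to the convex hull
  of the k-orbit of p (which does not reach q) and extended by the identity, would be an
  automorphism fixing q. Hence u x < h x at a single point x forces u < h everywhere. For an
  automorphism h moving x up and U = {u. u x < h x}, every element of a double coset U f U maps x
  below h (f (h x)); by homogeneity, finitely many such double cosets cannot cover Aut(X).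

  In an ultrahomogeneous chain, the double coset U f U of the pointwise stabilizer U of a finite
  set A is determined by the relative order of the points of A and of f(A): two automorphisms with
  the same pattern differ by a partial isomorphism fixing A, which extends to an automorphism.
  There are finitely many patterns, so finitely many double cosets cover Aut(X).

  The permutation topology is finer than the topology of pointwise convergence, which transfers
  each statement to the other topology.\<close>

section \<open>Order automorphisms\<close>

lemma Aut_strict_mono: "g \<in> Aut \<Longrightarrow> strict_mono g"
  by (simp add: Aut_def strict_mono_iff_mono bij_is_inj)

lemma Aut_less_iff: "g \<in> Aut \<Longrightarrow> g x < g y \<longleftrightarrow> x < y"
  by (simp add: Aut_strict_mono strict_mono_less)

lemma Aut_le_iff: "g \<in> Aut \<Longrightarrow> g x \<le> g y \<longleftrightarrow> x \<le> y"
  by (simp add: Aut_strict_mono strict_mono_less_eq)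

lemma Aut_inv_f [simp]: "g \<in> Aut \<Longrightarrow> inv g (g x) = x"
  by (simp add: Aut_def bij_is_inj)

lemma Aut_f_inv [simp]: "g \<in> Aut \<Longrightarrow> g (inv g x) = x"
  by (simp add: Aut_def bij_is_surj surj_f_inv_f)

lemma id_Aut: "id \<in> Aut"
  by (simp add: Aut_def mono_def)

lemma comp_Aut: "f \<in> Aut \<Longrightarrow> g \<in> Aut \<Longrightarrow> f \<circ> g \<in> Aut"
  by (auto simp: Aut_def bij_comp mono_def)

lemma inv_Aut: "g \<in> Aut \<Longrightarrow> inv g \<in> Aut"
  by (simp add: Aut_def bij_imp_bij_inv mono_inv)

lemma funpow_le_self:
  fixes f :: "'a::order \<Rightarrow> 'a"
  assumes "mono f" and "f p \<le> p"
  shows "(f ^^ n) p \<le> p"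
proof (induction n)
  case (Suc n)
  have "f ((f ^^ n) p) \<le> f p" using assms(1) Suc.IH by (rule monoD)
  then show ?case using assms(2) by simp
qed simp

section \<open>Roelcke precompactness of permutation groups\<close>

lemma roelcke_precompact_iff_double_coset_cover:
  "roelcke_precompact G T \<longleftrightarrow>
     (\<forall>U. openin T U \<and> id \<in> U \<longrightarrow>
        (\<exists>F. finite F \<and> F \<subseteq> G \<and> G \<subseteq> (\<Union>f\<in>F. {u \<circ> f \<circ> v |u v. u \<in> U \<and> v \<in> U})))"
  (is "_ \<longleftrightarrow> (\<forall>U. _ \<longrightarrow> (\<exists>F. _ \<and> _ \<and> G \<subseteq> ?cosets U F))")
proof
  assume pc: "roelcke_precompact G T"
  show "\<forall>U. openin T U \<and> id \<in> U \<longrightarrow> (\<exists>F. finite F \<and> F \<subseteq> G \<and> G \<subseteq> ?cosets U F)"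
  proof (intro allI impI)
    fix U assume U: "openin T U \<and> id \<in> U"
    define E where "E = {(x, y). x \<in> G \<and> y \<in> G \<and> (\<exists>u\<in>U. \<exists>v\<in>U. y = u \<circ> x \<circ> v)}"
    have "roelcke_entourage G T E"
      unfolding roelcke_entourage_def
    proof (intro conjI exI[of _ U])
      show "E \<subseteq> G \<times> G" unfolding E_def by blast
    qed (use U in \<open>simp_all add: E_def\<close>)
    then obtain F where F: "finite F" "F \<subseteq> G" and cover: "G \<subseteq> (\<Union>f\<in>F. {y. (f, y) \<in> E})"
      using pc unfolding roelcke_precompact_def by auto
    have "G \<subseteq> ?cosets U F"
    proof
      fix y assume "y \<in> G"
      with cover obtain f where "f \<in> F" "(f, y) \<in> E" by blast
      then show "y \<in> ?cosets U F" unfolding E_def by blast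
    qed
    with F show "\<exists>F. finite F \<and> F \<subseteq> G \<and> G \<subseteq> ?cosets U F" by blast
  qed
next
  assume cover: "\<forall>U. openin T U \<and> id \<in> U \<longrightarrow> (\<exists>F. finite F \<and> F \<subseteq> G \<and> G \<subseteq> ?cosets U F)"
  show "roelcke_precompact G T"
    unfolding roelcke_precompact_def roelcke_entourage_def
  proof (intro allI impI, elim conjE exE)
    fix E U assume U: "openin T U" "id \<in> U"
      and E: "{(x, y). x \<in> G \<and> y \<in> G \<and> (\<exists>u\<in>U. \<exists>v\<in>U. y = u \<circ> x \<circ> v)} \<subseteq> E"
    obtain F where F: "finite F" "F \<subseteq> G" and GF: "G \<subseteq> ?cosets U F"
      using cover[rule_format, OF conjI[OF U]] by (elim exE conjE)
    have "G \<subseteq> (\<Union>f\<in>F. {y. (f, y) \<in> E})"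
    proof
      fix y assume "y \<in> G"
      with GF obtain f u v where "f \<in> F" "u \<in> U" "v \<in> U" "y = u \<circ> f \<circ> v" by blast
      with F(2) E \<open>y \<in> G\<close> show "y \<in> (\<Union>f\<in>F. {y. (f, y) \<in> E})" by blast
    qed
    with F show "\<exists>F. finite F \<and> F \<subseteq> G \<and> G \<subseteq> (\<Union>f\<in>F. {y. (f, y) \<in> E})" by blast
  qed
qed

lemma roelcke_precompact_coarser:
  assumes "\<And>U. openin T U \<Longrightarrow> openin T' U" and "roelcke_precompact G T'"
  shows "roelcke_precompact G T"
  using assms unfolding roelcke_precompact_def roelcke_entourage_def by meson

lemma openin_tau_p_imp_openin_tau_partial:
  assumes "openin (tau_p :: ('a::linorder_topology \<Rightarrow> 'a) topology) U"
  shows "openin tau_partial U"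
proof -
  let ?discrete = "product_topology (\<lambda>_. discrete_topology UNIV) (UNIV :: 'a set)"
  obtain V where V: "openin (product_topology (\<lambda>_. euclidean) UNIV) V" "U = V \<inter> Aut"
    using assms by (auto simp: tau_p_def openin_subtopology)
  have "continuous_map ?discrete euclidean (\<lambda>x::'a \<Rightarrow> 'a. x k)" for k
    using continuous_map_compose[OF continuous_map_product_projection,
        of k UNIV "\<lambda>_. discrete_topology UNIV" euclidean id]
    by (simp add: o_def)
  then have "continuous_map ?discrete (product_topology (\<lambda>_. euclidean) UNIV) (id :: ('a \<Rightarrow> 'a) \<Rightarrow> _)"
    unfolding continuous_map_componentwise_UNIV by simp
  then have "openin ?discrete {x \<in> topspace ?discrete. id x \<in> V}"
    using V(1) by (rule openin_continuous_map_preimage)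
  with V(2) show ?thesis by (auto simp: tau_partial_def openin_subtopology)
qed

lemma openin_tau_p_less_at: "openin (tau_p :: ('a::linorder_topology \<Rightarrow> 'a) topology) {u \<in> Aut. u x < c}"
proof -
  have "openin (product_topology (\<lambda>_. euclidean) UNIV) {u::'a \<Rightarrow> 'a. u x \<in> {..<c}}"
    using openin_continuous_map_preimage[OF continuous_map_product_projection,
        of x UNIV "\<lambda>_. euclidean" "{..<c}"]
    by simp
  then show ?thesis unfolding tau_p_def openin_subtopology by blast
qed

lemma tau_partial_nhd_id_contains_stabilizer:
  assumes "openin (tau_partial :: ('a::linorder \<Rightarrow> 'a) topology) U" and "id \<in> U"
  obtains A where "finite A" and "\<And>g. g \<in> Aut \<Longrightarrow> (\<forall>a\<in>A. g a = a) \<Longrightarrow> g \<in> U"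
proof -
  obtain V where V: "openin (product_topology (\<lambda>_. discrete_topology UNIV) UNIV) V" "U = V \<inter> Aut"
    using assms(1) unfolding tau_partial_def openin_subtopology by blast
  with assms(2) have "id \<in> V" by blast
  then obtain W where W: "finite {i \<in> UNIV. W i \<noteq> topspace (discrete_topology (UNIV::'a set))}"
    "id \<in> Pi\<^sub>E UNIV W" "Pi\<^sub>E UNIV W \<subseteq> V"
    using V(1) unfolding openin_product_topology_alt by blast
  show ?thesis
  proof
    show "finite {i. W i \<noteq> UNIV}" using W(1) by simp
    fix g assume g: "g \<in> Aut" "\<forall>a\<in>{i. W i \<noteq> UNIV}. g a = a"
    have "g i \<in> W i" for i
    proof (cases "W i = UNIV")
      case False
      with g(2) have "g i = i" by blast
      with W(2) show ?thesis by (simp add: PiE_iff)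
    qed simp
    then have "g \<in> Pi\<^sub>E UNIV W" by (simp add: PiE_UNIV_domain)
    with W(3) V(2) g(1) show "g \<in> U" by blast
  qed
qed

section \<open>Rigid chains\<close>

lemma rigid_chain_fixed_point_imp_id:
  assumes "rigid_chain TYPE('a::linorder)" and "k \<in> Aut" and "k z = (z::'a)"
  shows "k = id"
  using assms id_Aut unfolding rigid_chain_def by (metis id_apply)

definition orbit :: "('a \<Rightarrow> 'a) \<Rightarrow> 'a \<Rightarrow> 'a set" where
  "orbit k p = range (\<lambda>n. (k ^^ n) p) \<union> range (\<lambda>n. (inv k ^^ n) p)"

definition orbital :: "('a::linorder \<Rightarrow> 'a) \<Rightarrow> 'a \<Rightarrow> 'a set" where
  "orbital k p = {y. \<exists>a\<in>orbit k p. \<exists>b\<in>orbit k p. a \<le> y \<and> y \<le> b}"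

lemma self_in_orbital: "p \<in> orbital k p"
proof -
  have "p \<in> orbit k p" unfolding orbit_def by (metis UnI1 funpow_0 rangeI)
  then show ?thesis unfolding orbital_def by blast
qed

lemma orbit_closed:
  assumes "k \<in> Aut" and "a \<in> orbit k p"
  shows "k a \<in> orbit k p"
proof -
  from assms(2) consider n where "a = (k ^^ n) p" | n where "a = (inv k ^^ n) p"
    unfolding orbit_def by blast
  then show ?thesis
  proof cases
    case (1 n)
    then have "k a = (k ^^ Suc n) p" by simp
    then show ?thesis unfolding orbit_def by blast
  next
    case (2 n)
    then have "k a = (k ^^ 1) p \<or> (\<exists>m. k a = (inv k ^^ m) p)"
      using assms(1) by (cases n) auto
    then show ?thesis unfolding orbit_def by blast
  qed
qed

lemma orbit_inv: "k \<in> Aut \<Longrightarrow> orbit (inv k) p = orbit k p"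
  by (auto simp: orbit_def Aut_def inv_inv_eq)

lemma orbital_closed: "k \<in> Aut \<Longrightarrow> y \<in> orbital k p \<Longrightarrow> k y \<in> orbital k p"
  unfolding orbital_def using orbit_closed by (blast dest: Aut_le_iff[THEN iffD2])

lemma orbital_closed_inv:
  assumes "k \<in> Aut" and "y \<in> orbital k p"
  shows "inv k y \<in> orbital k p"
  using assms orbital_closed[OF inv_Aut, of k y p] by (simp add: orbital_def orbit_inv)

lemma chain_interval_orbital: "chain_interval (orbital k p)"
  unfolding chain_interval_def orbital_def by (blast intro: order_trans)

lemma orbital_subset_lessThan:
  assumes k: "k \<in> Aut" and "k p \<le> p" "p < q" "q \<le> k q"
  shows "orbital k p \<subseteq> {..<q}"
proof -
  have "mono k" using k by (simp add: Aut_def)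
  then have "(k ^^ n) p < q" for n
    using funpow_le_self assms(2,3) by (blast intro: le_less_trans)
  moreover have "inv k x < q" if "x < q" for x
  proof -
    have "inv k x < inv k (k q)"
      using that assms(4) by (simp add: Aut_less_iff[OF inv_Aut[OF k]])
    then show ?thesis using k by simp
  qed
  then have "(inv k ^^ n) p < q" for n
    using assms(3) by (induction n) simp_all
  ultimately have "orbit k p \<subseteq> {..<q}" unfolding orbit_def by auto
  then show ?thesis unfolding orbital_def by (auto intro: le_less_trans)
qed

lemma Aut_restrict_to_invariant_interval:
  assumes C: "chain_interval C" and k: "k \<in> Aut"
    and kC: "\<And>y. y \<in> C \<Longrightarrow> k y \<in> C" and kiC: "\<And>y. y \<in> C \<Longrightarrow> inv k y \<in> C"
  shows "(\<lambda>y. if y \<in> C then k y else y) \<in> Aut"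
proof -
  let ?k = "\<lambda>y. if y \<in> C then k y else y"
  have "?k \<circ> (\<lambda>y. if y \<in> C then inv k y else y) = id"
    and "(\<lambda>y. if y \<in> C then inv k y else y) \<circ> ?k = id"
    using k kC kiC by (auto simp: fun_eq_iff)
  then have "bij ?k" using o_bij by blast
  moreover have "mono ?k"
  proof
    fix x y :: 'a assume xy: "x \<le> y"
    have convex: "b \<in> C" if "a \<in> C" "c \<in> C" "a \<le> b" "b \<le> c" for a b c
      using C that unfolding chain_interval_def by blast
    show "?k x \<le> ?k y"
    proof (cases "x \<in> C"; cases "y \<in> C")
      assume "x \<in> C" "y \<notin> C"
      then have "k x \<le> y" using convex[of x "k x" y] kC xy by (meson nle_le)
      with \<open>x \<in> C\<close> \<open>y \<notin> C\<close> show ?thesis by simp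
    next
      assume "x \<notin> C" "y \<in> C"
      then have "x \<le> k y" using convex[of "k y" y x] kC xy by (meson nle_le)
      with \<open>x \<notin> C\<close> \<open>y \<in> C\<close> show ?thesis by simp
    qed (use xy Aut_le_iff[OF k] in auto)
  qed
  ultimately show ?thesis by (simp add: Aut_def)
qed

lemma rigid_chain_no_opposite_displacement:
  assumes rig: "rigid_chain TYPE('a::linorder)" and k: "k \<in> Aut"
    and "p < q" and "k p < p" and "q < k (q::'a)"
  shows False
proof -
  define k' where "k' = (\<lambda>y. if y \<in> orbital k p then k y else y)"
  have "k' \<in> Aut"
    unfolding k'_def using k
    by (intro Aut_restrict_to_invariant_interval chain_interval_orbital orbital_closed orbital_closed_inv)
  moreover have "q \<notin> orbital k p"
    using orbital_subset_lessThan[of k p q] k assms(3-5) by fastforce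
  then have "k' q = q" by (simp add: k'_def)
  ultimately have "k' = id" by (rule rigid_chain_fixed_point_imp_id[OF rig])
  moreover have "k' p = k p" using self_in_orbital[of p k] by (simp add: k'_def)
  ultimately show False using \<open>k p < p\<close> by simp
qed

lemma rigid_chain_displacement_sign:
  assumes rig: "rigid_chain TYPE('a::linorder)" and k: "k \<in> Aut" and "k p < p"
  shows "k z < (z::'a)"
proof (rule ccontr)
  assume "\<not> k z < z"
  moreover have "k z \<noteq> z"
  proof
    assume "k z = z"
    then have "k = id" by (rule rigid_chain_fixed_point_imp_id[OF rig k])
    with \<open>k p < p\<close> show False by simp
  qed
  ultimately have "z < k z" by simp
  consider "p < z" | "z < p"
    using \<open>k p < p\<close> \<open>z < k z\<close> by (cases p z rule: linorder_cases) auto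
  then show False
  proof cases
    case 1
    then show False using rigid_chain_no_opposite_displacement[OF rig k] \<open>k p < p\<close> \<open>z < k z\<close> by blast
  next
    case 2
    moreover have "inv k z < inv k (k z)"
      using \<open>z < k z\<close> by (simp add: Aut_less_iff[OF inv_Aut[OF k]])
    then have "inv k z < z" using k by simp
    moreover have "k p < k (inv k p)" using \<open>k p < p\<close> k by simp
    then have "p < inv k p" by (simp add: Aut_less_iff[OF k])
    ultimately show False using rigid_chain_no_opposite_displacement[OF rig inv_Aut[OF k]] by blast
  qed
qed

lemma rigid_chain_less_at_imp_less:
  assumes rig: "rigid_chain TYPE('a::linorder)" and u: "u \<in> Aut" and h: "h \<in> Aut"
    and "u x < h x"
  shows "u z < h (z::'a)"
proof -
  have "inv h (u x) < inv h (h x)"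
    using \<open>u x < h x\<close> by (simp add: Aut_less_iff[OF inv_Aut[OF h]])
  then have "(inv h \<circ> u) x < x" using h by simp
  then have "(inv h \<circ> u) z < z"
    using rigid_chain_displacement_sign[OF rig comp_Aut[OF inv_Aut[OF h] u]] by blast
  then have "h (inv h (u z)) < h z" by (simp add: Aut_less_iff[OF h])
  then show ?thesis using h by simp
qed

lemma rigid_chain_not_roelcke_precompact_tau_p:
  assumes rig: "rigid_chain TYPE('a::linorder_topology)" and "\<exists>x y::'a. x \<noteq> y"
  shows "\<not> roelcke_precompact (Aut :: ('a \<Rightarrow> 'a) set) tau_p"
proof
  assume pc: "roelcke_precompact (Aut :: ('a \<Rightarrow> 'a) set) tau_p"
  have hom: "\<exists>g\<in>Aut. g x = y" for x y :: 'a
    using rig by (simp add: rigid_chain_def homogeneous_chain_def)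
  obtain x0 x1 :: 'a where "x0 < x1" using assms(2) by (metis linorder_neqE)
  moreover obtain h where h: "h \<in> Aut" and "h x0 = x1" using hom by blast
  ultimately have "id x0 < h x0" by simp
  then have up: "z < h z" for z
    using rigid_chain_less_at_imp_less[OF rig id_Aut h] by simp
  define U where "U = {u \<in> Aut. u x0 < h x0}"
  have below: "u z < h z" if "u \<in> U" for u z
    using that rigid_chain_less_at_imp_less[OF rig _ h] unfolding U_def by blast
  have "openin tau_p U" unfolding U_def by (rule openin_tau_p_less_at)
  moreover have "id \<in> U" unfolding U_def using id_Aut up by simp
  ultimately obtain F where "finite F" "F \<subseteq> Aut"
    and cover: "Aut \<subseteq> (\<Union>f\<in>F. {u \<circ> f \<circ> v |u v. u \<in> U \<and> v \<in> U})"
    using pc unfolding roelcke_precompact_iff_double_coset_cover by meson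
  define m where "m = Max (insert x0 ((\<lambda>f. h (f (h x0))) ` F))"
  obtain g where g: "g \<in> Aut" "g x0 = h m" using hom by blast
  from cover g(1) have "g \<in> (\<Union>f\<in>F. {u \<circ> f \<circ> v |u v. u \<in> U \<and> v \<in> U})" by (rule subsetD)
  then obtain f u v where "f \<in> F" "u \<in> U" "v \<in> U" and "g = u \<circ> f \<circ> v" by blast
  moreover have "f \<in> Aut" "u \<in> Aut" "v x0 < h x0"
    using \<open>f \<in> F\<close> \<open>F \<subseteq> Aut\<close> \<open>u \<in> U\<close> \<open>v \<in> U\<close> unfolding U_def by auto
  ultimately have "g x0 = u (f (v x0))" by simp
  also have "\<dots> \<le> u (f (h x0))"
    using \<open>v x0 < h x0\<close> by (simp add: Aut_le_iff \<open>f \<in> Aut\<close> \<open>u \<in> Aut\<close>)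
  also have "\<dots> < h (f (h x0))" by (rule below[OF \<open>u \<in> U\<close>])
  also have "\<dots> \<le> m" unfolding m_def by (rule Max_ge) (use \<open>finite F\<close> \<open>f \<in> F\<close> in auto)
  also have "\<dots> < h m" by (rule up)
  finally show False using g(2) by simp
qed

section \<open>Ultrahomogeneous chains\<close>

lemma ultrahomogeneous_chain_extend:
  assumes uh: "ultrahomogeneous_chain TYPE('a::linorder)" and "finite S"
    and h: "strict_mono_on S (h :: 'a \<Rightarrow> 'a)"
  shows "\<exists>g\<in>Aut. \<forall>x\<in>S. g x = h x"
proof -
  define xs where "xs = sorted_list_of_set S"
  have sorted: "sorted_wrt (<) xs" and set_xs: "set xs = S"
    unfolding xs_def using \<open>finite S\<close> by simp_all
  then have "sorted_wrt (<) (map h xs)"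
    unfolding sorted_wrt_map using h
    by (auto intro: sorted_wrt_mono_rel[of xs "(<)"] dest: strict_mono_onD)
  then obtain g where "g \<in> Aut" and g: "\<forall>k < length xs. g (xs ! k) = map h xs ! k"
    using uh sorted unfolding ultrahomogeneous_chain_def by fastforce
  have "\<forall>x\<in>S. g x = h x"
    using g unfolding set_xs[symmetric] by (auto simp: in_set_conv_nth)
  with \<open>g \<in> Aut\<close> show ?thesis by blast
qed

text \<open>By trichotomy the pattern also records where a = f b.\<close>

definition position_pattern :: "'a::linorder set \<Rightarrow> ('a \<Rightarrow> 'a) \<Rightarrow> ('a \<times> 'a) set \<times> ('a \<times> 'a) set" where
  "position_pattern A g = ({(a, b) \<in> A \<times> A. a < g b}, {(a, b) \<in> A \<times> A. g b < a})"

lemma finite_position_patterns: "finite A \<Longrightarrow> finite (position_pattern A ` G)"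
proof (rule finite_subset)
  show "position_pattern A ` G \<subseteq> Pow (A \<times> A) \<times> Pow (A \<times> A)"
    unfolding position_pattern_def by auto
qed simp

lemma position_pattern_eqD:
  assumes "position_pattern A f = position_pattern A g" and "a \<in> A" "b \<in> A"
  shows "a < f b \<longleftrightarrow> a < g b" and "f b < a \<longleftrightarrow> g b < a"
  using assms unfolding position_pattern_def by (auto simp: set_eq_iff)

lemma same_position_pattern_strict_mono_on:
  assumes f: "f \<in> Aut" and g: "g \<in> Aut"
    and pattern: "position_pattern A f = position_pattern A g"
  defines "\<phi> \<equiv> \<lambda>y. if y \<in> A then y else f (inv g y)"
  shows "strict_mono_on (A \<union> g ` A) \<phi>" and "\<And>b. b \<in> A \<Longrightarrow> \<phi> (g b) = f b"
proof -
  note lt = position_pattern_eqD(1)[OF pattern] and gt = position_pattern_eqD(2)[OF pattern]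
  show \<phi>g: "\<phi> (g b) = f b" if "b \<in> A" for b
  proof (cases "g b \<in> A")
    case True
    then have "\<not> g b < f b" "\<not> f b < g b" using lt gt that by blast+
    with True show ?thesis by (simp add: \<phi>_def)
  qed (use g in \<open>simp add: \<phi>_def\<close>)
  show "strict_mono_on (A \<union> g ` A) \<phi>"
  proof (rule strict_mono_onI)
    fix x y assume "x \<in> A \<union> g ` A" "y \<in> A \<union> g ` A" "x < y"
    then consider "x \<in> A" "y \<in> A" | b where "x \<in> A" "b \<in> A" "y = g b"
      | a where "a \<in> A" "x = g a" "y \<in> A" | a b where "a \<in> A" "b \<in> A" "x = g a" "y = g b"
      by blast
    then show "\<phi> x < \<phi> y"
    proof cases
      case 1 with \<open>x < y\<close> show ?thesis by (simp add: \<phi>_def)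
    next
      case 2 with \<open>x < y\<close> show ?thesis using lt \<phi>g by (simp add: \<phi>_def)
    next
      case 3 with \<open>x < y\<close> show ?thesis using gt \<phi>g by (simp add: \<phi>_def)
    next
      case 4 with \<open>x < y\<close> show ?thesis using \<phi>g by (simp add: Aut_less_iff f g)
    qed
  qed
qed

lemma ultrahomogeneous_chain_same_position_pattern:
  assumes uh: "ultrahomogeneous_chain TYPE('a::linorder)" and "finite A"
    and f: "(f :: 'a \<Rightarrow> 'a) \<in> Aut" and g: "g \<in> Aut"
    and pattern: "position_pattern A f = position_pattern A g"
  obtains u v where "u \<in> Aut" "v \<in> Aut" "\<forall>a\<in>A. u a = a" "\<forall>a\<in>A. v a = a"
    and "g = u \<circ> f \<circ> v"
proof -
  have "finite (A \<union> g ` A)" using \<open>finite A\<close> by simp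
  moreover have "strict_mono_on (A \<union> g ` A) (\<lambda>y. if y \<in> A then y else f (inv g y))"
    by (rule same_position_pattern_strict_mono_on(1)[OF f g pattern])
  ultimately have "\<exists>w\<in>Aut. \<forall>x\<in>A \<union> g ` A. w x = (if x \<in> A then x else f (inv g x))"
    by (rule ultrahomogeneous_chain_extend[OF uh])
  then obtain w where w: "w \<in> Aut"
    and w_eq: "\<forall>x\<in>A \<union> g ` A. w x = (if x \<in> A then x else f (inv g x))" ..
  have wA: "w a = a" if "a \<in> A" for a
    using w_eq that by simp
  have wg: "w (g a) = f a" if "a \<in> A" for a
    using w_eq same_position_pattern_strict_mono_on(2)[OF f g pattern that] that by simp
  show ?thesis
  proof
    show "inv w \<in> Aut" and "inv f \<circ> w \<circ> g \<in> Aut"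
      using f g w by (simp_all add: inv_Aut comp_Aut)
    show "\<forall>a\<in>A. inv w a = a"
      using wA Aut_inv_f[OF w] by metis
    show "\<forall>a\<in>A. (inv f \<circ> w \<circ> g) a = a"
      using wg f by simp
    show "g = inv w \<circ> f \<circ> (inv f \<circ> w \<circ> g)"
      using f w by (simp add: fun_eq_iff)
  qed
qed

lemma ultrahomogeneous_chain_roelcke_precompact_tau_partial:
  assumes uh: "ultrahomogeneous_chain TYPE('a::linorder_topology)"
  shows "roelcke_precompact (Aut :: ('a \<Rightarrow> 'a) set) tau_partial"
  unfolding roelcke_precompact_iff_double_coset_cover
proof (intro allI impI)
  fix U :: "('a \<Rightarrow> 'a) set" assume "openin tau_partial U \<and> id \<in> U"
  then obtain A where "finite A" and stab: "\<And>g. g \<in> Aut \<Longrightarrow> \<forall>a\<in>A. g a = a \<Longrightarrow> g \<in> U"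
    using tau_partial_nhd_id_contains_stabilizer by meson
  obtain F where F: "F \<subseteq> Aut" "finite F" and patterns: "position_pattern A ` Aut = position_pattern A ` F"
    using finite_subset_image[OF finite_position_patterns[OF \<open>finite A\<close>] subset_refl] by blast
  have "Aut \<subseteq> (\<Union>f\<in>F. {u \<circ> f \<circ> v |u v. u \<in> U \<and> v \<in> U})"
  proof
    fix g :: "'a \<Rightarrow> 'a" assume "g \<in> Aut"
    with patterns obtain f where "f \<in> F" "position_pattern A f = position_pattern A g"
      by (metis image_iff)
    with ultrahomogeneous_chain_same_position_pattern[OF uh \<open>finite A\<close>] F(1) \<open>g \<in> Aut\<close>
    obtain u v where "u \<in> U" "v \<in> U" "g = u \<circ> f \<circ> v"
      using stab by (metis subsetD)
    with \<open>f \<in> F\<close> show "g \<in> (\<Union>f\<in>F. {u \<circ> f \<circ> v |u v. u \<in> U \<and> v \<in> U})" by blast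
  qed
  with F show "\<exists>F. finite F \<and> F \<subseteq> Aut \<and> Aut \<subseteq> (\<Union>f\<in>F. {u \<circ> f \<circ> v |u v. u \<in> U \<and> v \<in> U})"
    by blast
qed

theorem theorem3p3:
  assumes "simple_chain TYPE('a::linorder_topology)"
  shows "(rigid_chain TYPE('a) \<and> (\<exists>x y::'a. x \<noteq> y) \<longrightarrow>
            \<not> roelcke_precompact (Aut :: ('a \<Rightarrow> 'a) set) tau_p \<and>
            \<not> roelcke_precompact (Aut :: ('a \<Rightarrow> 'a) set) tau_partial)
       \<and> (ultrahomogeneous_chain TYPE('a) \<longrightarrow>
            roelcke_precompact (Aut :: ('a \<Rightarrow> 'a) set) tau_partial \<and>
            roelcke_precompact (Aut :: ('a \<Rightarrow> 'a) set) tau_p)"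
proof -
  have p_from_partial: "roelcke_precompact (Aut :: ('a \<Rightarrow> 'a) set) tau_p"
    if "roelcke_precompact (Aut :: ('a \<Rightarrow> 'a) set) tau_partial"
    using openin_tau_p_imp_openin_tau_partial that by (rule roelcke_precompact_coarser)
  show ?thesis
    using rigid_chain_not_roelcke_precompact_tau_p p_from_partial
      ultrahomogeneous_chain_roelcke_precompact_tau_partial by blast
qed

end
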